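(* Suppose nature draws $\bar g$ uniformly at random from $\mathcal{G}_{2k+1}$. Let $\mathcal{D}$ be the distribution of $(\bm{x},y)$ with $\bm{x}\sim\mathrm{Unif}[-1,1]^p$ and $y=\bar g(\bm{x})+\epsilon$, where $\epsilon\sim N(0,\sigma_\epsilon^2)$ is independent of $\bm{x}$. The learner observes $n$ i.i.d. samples from $\mathcal{D}$. For $g\in\mathcal{G}_{2k+1}$ define $h_g(\bm{x},y)=\frac12(y-g(\bm{x}))^2$, and let $\mathcal{H}_{2k+1}=\{h_g : g\in\mathcal{G}_{2k+1}\}$. Set $\bar h=h_{\bar g}$, and let $\hat h=h_{\hat g}$ for any estimator $\hat g$, i.e. any function of the sample taking values in $\mathcal{G}_{2k+1}$. If $$n\le\Big(\log\Big(q^{k+1}\binom{p}{k+1}\Big)-2\log2\Big)\frac{\sigma_\epsilon^2}{2},$$ then with probability at least $\tfrac12$, $$\mathbb{E}_{\mathcal{D}}[\hat h]-\mathbb{E}_{\mathcal{D}}[\bar h]\ge1,$$ where $\mathbb{E}_\mathcal{D}[h]=\mathbb{E}_{(\bm{x},y)\sim\mathcal{D}}[h(\bm{x},y)]$ is computed with $\hat g$ held fixed.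
   Context: For $i=1,\dots,q$ let $\phi_i(z)=\sqrt2\cos(i\pi z)$ on $[-1,1]$. Let $p,q,k$ be positive integers with $k+1\le p$. $\mathcal{G}_{2k+1}$ is the set of functions $g_\mathcal{A}(\bm{x})=\prod_{(i,j)\in\mathcal{A}}\phi_i(x_j)$ on $[-1,1]^p$, where $\mathcal{A}\subseteq\{1,\dots,q\}\times\{1,\dots,p\}$ satisfies: - $|\mathcal{A}|\le k+1$; - no two elements of $\mathcal{A}$ share the same second coordinate $j$. The empty product is the constant $1$. *)

theory Defs
  imports "HOL-Probability.Probability"
begin

definition phi :: "nat \<Rightarrow> real \<Rightarrow> real" where
  "phi i z = sqrt 2 * cos (real i * pi * z)"

text \<open>Points of [-1,1]^p are functions nat => real, with coordinates 1..p.\<close>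
definition admissible :: "nat \<Rightarrow> nat \<Rightarrow> nat \<Rightarrow> (nat \<times> nat) set \<Rightarrow> bool" where
  "admissible p q k A \<longleftrightarrow> A \<subseteq> {1..q} \<times> {1..p} \<and> card A \<le> k + 1 \<and> inj_on snd A"

definition gA :: "(nat \<times> nat) set \<Rightarrow> (nat \<Rightarrow> real) \<Rightarrow> real" where
  "gA A x = (\<Prod>(i,j)\<in>A. phi i (x j))"

definition Gcls :: "nat \<Rightarrow> nat \<Rightarrow> nat \<Rightarrow> ((nat \<Rightarrow> real) \<Rightarrow> real) set" where
  "Gcls p q k = gA ` {A. admissible p q k A}"

definition X_dist :: "nat \<Rightarrow> (nat \<Rightarrow> real) measure" where
  "X_dist p = PiM {1..p} (\<lambda>_. uniform_measure lborel {-1..1::real})"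

text \<open>Noise N(0, sigma^2), sigma the standard deviation.\<close>
definition noise :: "real \<Rightarrow> real measure" where
  "noise \<sigma> = density lborel (normal_density 0 \<sigma>)"

definition obs_space :: "nat \<Rightarrow> ((nat \<Rightarrow> real) \<times> real) measure" where
  "obs_space p = PiM {1..p} (\<lambda>_. borel) \<Otimes>\<^sub>M borel"

definition D_dist :: "nat \<Rightarrow> real \<Rightarrow> ((nat \<Rightarrow> real) \<Rightarrow> real) \<Rightarrow> ((nat \<Rightarrow> real) \<times> real) measure" where
  "D_dist p \<sigma> g = distr (X_dist p \<Otimes>\<^sub>M noise \<sigma>) (obs_space p) (\<lambda>(x, e). (x, g x + e))"

definition sample_space :: "nat \<Rightarrow> nat \<Rightarrow> (nat \<Rightarrow> (nat \<Rightarrow> real) \<times> real) measure" where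
  "sample_space n p = PiM {..<n} (\<lambda>_. obs_space p)"

definition sample_dist :: "nat \<Rightarrow> nat \<Rightarrow> real \<Rightarrow> ((nat \<Rightarrow> real) \<Rightarrow> real) \<Rightarrow> (nat \<Rightarrow> (nat \<Rightarrow> real) \<times> real) measure" where
  "sample_dist n p \<sigma> g = PiM {..<n} (\<lambda>_. D_dist p \<sigma> g)"

definition hloss :: "((nat \<Rightarrow> real) \<Rightarrow> real) \<Rightarrow> (nat \<Rightarrow> real) \<times> real \<Rightarrow> real" where
  "hloss g = (\<lambda>(x, y). (y - g x)\<^sup>2 / 2)"

definition risk :: "((nat \<Rightarrow> real) \<times> real) measure \<Rightarrow> ((nat \<Rightarrow> real) \<Rightarrow> real) \<Rightarrow> real" where
  "risk D g = (\<integral>z. hloss g z \<partial>D)"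

end

theory Submission
  imports Defs
begin

text \<open>Distinct members of the class are orthonormal in \<open>L\<^sup>2\<close> of the uniform law on
  \<open>[-1,1]\<^sup>p\<close>, so a wrong guess \<open>ghat \<noteq> g\<close> costs exactly one unit of excess risk, and the
  statement says that on average over \<open>g\<close> the estimator identifies \<open>g\<close> with probability at
  most \<open>1/2\<close>. Relative to the pure-noise sample law \<open>Q\<close>, the sample law under \<open>g\<close> has density
  \<open>\<Prod>i. exp ((2 y\<^sub>i g(x\<^sub>i) - g(x\<^sub>i)\<^sup>2) / (2\<sigma>\<^sup>2))\<close> and Kullback--Leibler divergence
  \<open>n / (2\<sigma>\<^sup>2)\<close>. Fano's argument bounds \<open>c \<cdot> P\<^sub>g(E) \<le> KL + ln (1 + (exp c - 1) Q(E))\<close> with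
  \<open>c = ln M\<close>, \<open>M\<close> the size of the class, and sums over the disjoint events \<open>{ghat = g}\<close>:
  the average success probability is at most \<open>1/2\<close> once \<open>n / (2\<sigma>\<^sup>2) + ln 2 \<le> ln M / 2\<close>, which
  the sample-size hypothesis gives because \<open>M \<ge> q ^ (k + 1) * (p choose (k + 1))\<close>.\<close>

section \<open>Orthonormality of the class\<close>

abbreviation Unif :: "real measure" where
  "Unif \<equiv> uniform_measure lborel {-1..1}"

lemma prob_space_Unif: "prob_space Unif"
  by (rule prob_space_uniform_measure) auto

lemma integral_Unif:
  fixes f :: "real \<Rightarrow> real"
  assumes [measurable]: "f \<in> borel_measurable borel"
  shows "(\<integral>x. f x \<partial>Unif) = (\<integral>x. f x * indicator {-1..1} x \<partial>lborel) / 2"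
proof -
  have "Unif = density lborel (\<lambda>x. ennreal (indicator {-1..1::real} x / 2))"
    unfolding uniform_measure_def
    by (intro density_cong) (auto simp: indicator_def ennreal_divide_numeral[symmetric] divide_ennreal_def)
  then show ?thesis
    by (simp add: integral_density mult.commute)
qed

lemma integral_cos_int_pi:
  fixes m :: int
  shows "(\<integral>x. cos (m * pi * x) * indicator {-1..1} x \<partial>lborel) = (if m = 0 then 2 else 0)"
proof (cases "m = 0")
  case True
  then show ?thesis
    using integral_FTC_Icc_real[of "-1" 1 "\<lambda>x. x" "\<lambda>x. 1"] by (auto intro!: derivative_eq_intros)
next
  case False
  have "(\<integral>x. cos (m * pi * x) * indicator {-1..1} x \<partial>lborel)
      = sin (m * pi * 1) / (m * pi) - sin (m * pi * (-1)) / (m * pi)"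
    using False by (intro integral_FTC_Icc_real) (auto intro!: derivative_eq_intros simp: field_simps)
  also have "\<dots> = 0"
    using sin_zero_iff_int2[of "m * pi"] by auto
  finally show ?thesis using False by simp
qed

lemma integral_Unif_cos: "(\<integral>x. cos (real_of_int m * pi * x) \<partial>Unif) = (if m = 0 then 1 else 0)"
  by (subst integral_Unif) (auto simp: integral_cos_int_pi)

text \<open>Extending \<open>phi\<close> by the constant \<open>1\<close> at frequency \<open>0\<close> makes every \<open>gA A\<close> a full
  tensor product over the coordinates \<open>1..p\<close>, absent coordinates contributing the factor \<open>1\<close>.\<close>
definition psi :: "nat \<Rightarrow> real \<Rightarrow> real" where
  "psi i z = (if i = 0 then 1 else phi i z)"

lemma phi_measurable [measurable]: "phi i \<in> borel_measurable borel"
  unfolding phi_def by measurable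

lemma psi_measurable [measurable]: "psi i \<in> borel_measurable borel"
  unfolding psi_def by measurable

lemma abs_phi_le: "\<bar>phi i z\<bar> \<le> sqrt 2"
  unfolding phi_def by (auto simp: abs_mult)

lemma abs_psi_le: "\<bar>psi i z\<bar> \<le> sqrt 2"
  unfolding psi_def using abs_phi_le[of i z] by auto

lemma psi_orthonormal: "(\<integral>z. psi a z * psi b z \<partial>Unif) = (if a = b then 1 else 0)"
proof -
  interpret prob_space Unif by (rule prob_space_Unif)
  define c where "c i = (if i = 0 then 1 else sqrt 2)" for i :: nat
    \<comment> \<open>so that \<open>psi i z = c i * cos (i * pi * z)\<close>\<close>
  have cos_integrable: "integrable Unif (\<lambda>x. cos (real_of_int m * pi * x))" for m
    by (intro integrable_const_bound[where B=1]) auto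
  have "(\<lambda>z. psi a z * psi b z) = (\<lambda>z. c a * c b / 2 *
      (cos (real_of_int (int a - int b) * pi * z) + cos (real_of_int (int a + int b) * pi * z)))"
    by (simp add: fun_eq_iff psi_def phi_def c_def cos_times_cos algebra_simps)
  then have "(\<integral>z. psi a z * psi b z \<partial>Unif) = c a * c b / 2 *
      ((\<integral>z. cos (real_of_int (int a - int b) * pi * z) \<partial>Unif)
        + (\<integral>z. cos (real_of_int (int a + int b) * pi * z) \<partial>Unif))"
    by (simp only: integral_mult_right_zero Bochner_Integration.integral_add[OF cos_integrable cos_integrable])
  also have "\<dots> = (if a = b then 1 else 0)"
    by (simp only: integral_Unif_cos) (auto simp: c_def)
  finally show ?thesis .
qed

lemma prob_space_X_dist: "prob_space (X_dist p)"
  unfolding X_dist_def using prob_space_Unif by (intro prob_space_PiM) auto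

lemma sets_X_dist: "sets (X_dist p) = sets (PiM {1..p} (\<lambda>_. borel))"
  unfolding X_dist_def by (intro sets_PiM_cong) auto

lemma measurable_X_dist_iff [simp]: "measurable (X_dist p) N = measurable (PiM {1..p} (\<lambda>_. borel)) N"
  by (rule measurable_cong_sets[OF sets_X_dist refl])

definition freq :: "(nat \<times> nat) set \<Rightarrow> nat \<Rightarrow> nat" where
  "freq A j = (if j \<in> snd ` A then fst (the_inv_into A snd j) else 0)"

lemma freq_eq:
  assumes "inj_on snd A" "(i, j) \<in> A"
  shows "freq A j = i"
proof -
  have "the_inv_into A snd (snd (i, j)) = (i, j)"
    by (rule the_inv_into_f_f[OF assms])
  then show ?thesis using assms(2) unfolding freq_def by force
qed

lemma freq_eq_0: "j \<notin> snd ` A \<Longrightarrow> freq A j = 0"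
  unfolding freq_def by auto

lemma gA_eq_prod_psi:
  assumes A: "A \<subseteq> {1..q} \<times> {1..p}" "inj_on snd A"
  shows "gA A x = (\<Prod>j\<in>{1..p}. psi (freq A j) (x j))"
proof -
  have "gA A x = (\<Prod>a\<in>A. psi (freq A (snd a)) (x (snd a)))"
    unfolding gA_def using A by (intro prod.cong) (auto simp: freq_eq psi_def)
  also have "\<dots> = (\<Prod>j\<in>snd ` A. psi (freq A j) (x j))"
    by (rule prod.reindex[OF A(2), symmetric, unfolded comp_def])
  also have "\<dots> = (\<Prod>j\<in>{1..p}. psi (freq A j) (x j))"
    using A(1) by (intro prod.mono_neutral_left) (auto simp: freq_eq_0 psi_def)
  finally show ?thesis .
qed

lemma subset_if_freq_eq:
  assumes A: "A \<subseteq> {1..q} \<times> {1..p}" "inj_on snd A"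
    and B: "inj_on snd B" and freq: "\<forall>j\<in>{1..p}. freq A j = freq B j"
  shows "A \<subseteq> B"
proof clarify
  fix i j assume ij: "(i, j) \<in> A"
  then have "j \<in> {1..p}" "i \<noteq> 0" using A(1) by auto
  then have "freq B j = i" "i \<noteq> 0" using freq freq_eq[OF A(2) ij] by auto
  then obtain i' where i': "(i', j) \<in> B" using freq_eq_0[of j B] by force
  with freq_eq[OF B i'] \<open>freq B j = i\<close> show "(i, j) \<in> B" by simp
qed

lemma gA_orthonormal:
  assumes A: "A \<subseteq> {1..q} \<times> {1..p}" "inj_on snd A"
    and B: "B \<subseteq> {1..q} \<times> {1..p}" "inj_on snd B"
  shows "(\<integral>x. gA A x * gA B x \<partial>X_dist p) = (if A = B then 1 else 0)"
proof -
  interpret Unif: prob_space Unif by (rule prob_space_Unif)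
  interpret product_sigma_finite "\<lambda>_. Unif" by standard
  have bounded: "\<bar>psi a z * psi b z\<bar> \<le> 2" for a b z
    using mult_mono[OF abs_psi_le[of a z] abs_psi_le[of b z]] by (simp add: abs_mult)
  have "(\<integral>x. gA A x * gA B x \<partial>X_dist p)
      = (\<integral>x. (\<Prod>j\<in>{1..p}. psi (freq A j) (x j) * psi (freq B j) (x j)) \<partial>PiM {1..p} (\<lambda>_. Unif))"
    unfolding X_dist_def gA_eq_prod_psi[OF A] gA_eq_prod_psi[OF B] by (simp add: prod.distrib)
  also have "\<dots> = (\<Prod>j\<in>{1..p}. (\<integral>z. psi (freq A j) z * psi (freq B j) z \<partial>Unif))"
    using bounded by (intro product_integral_prod Unif.integrable_const_bound[where B=2]) auto
  also have "\<dots> = (\<Prod>j\<in>{1..p}. if freq A j = freq B j then 1 else 0)"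
    by (simp add: psi_orthonormal)
  also have "\<dots> = (if A = B then 1 else 0)"
    using subset_if_freq_eq[OF A B(2)] subset_if_freq_eq[OF B A(2)] by auto
  finally show ?thesis .
qed

lemma gA_measurable:
  assumes "A \<subseteq> UNIV \<times> {1..p}"
  shows "gA A \<in> borel_measurable (PiM {1..p} (\<lambda>_. borel))"
proof -
  have "(\<lambda>x. \<Prod>a\<in>A. phi (fst a) (x (snd a))) \<in> borel_measurable (PiM {1..p} (\<lambda>_. borel))"
    using assms by (intro borel_measurable_prod) auto
  moreover have "gA A = (\<lambda>x. \<Prod>a\<in>A. phi (fst a) (x (snd a)))"
    by (simp add: fun_eq_iff gA_def case_prod_beta)
  ultimately show ?thesis by simp
qed

lemma abs_gA_le: "\<bar>gA A x\<bar> \<le> sqrt 2 ^ card A"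
proof -
  have "\<bar>gA A x\<bar> = (\<Prod>a\<in>A. \<bar>phi (fst a) (x (snd a))\<bar>)"
    unfolding gA_def by (simp add: abs_prod case_prod_beta)
  also have "\<dots> \<le> (\<Prod>a\<in>A. sqrt 2)"
    by (intro prod_mono) (auto simp: abs_phi_le)
  finally show ?thesis by simp
qed

section \<open>Excess risk\<close>

lemma prob_space_noise: "\<sigma> > 0 \<Longrightarrow> prob_space (noise \<sigma>)"
  unfolding noise_def by (rule prob_space_normal_density)

lemma noise_first_moment:
  assumes "\<sigma> > 0"
  shows "integrable (noise \<sigma>) (\<lambda>e. e)" "(\<integral>e. e \<partial>noise \<sigma>) = 0"
  unfolding noise_def
  by (auto simp: integrable_density integral_density
      intro: integrable_normal_moment_nz_1[OF assms] integral_normal_moment_nz_1[OF assms])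

lemma noise_second_moment:
  assumes "\<sigma> > 0"
  shows "integrable (noise \<sigma>) (\<lambda>e. e\<^sup>2)" "(\<integral>e. e\<^sup>2 \<partial>noise \<sigma>) = \<sigma>\<^sup>2"
proof -
  show "integrable (noise \<sigma>) (\<lambda>e. e\<^sup>2)"
    unfolding noise_def using integrable_normal_moment[OF assms, of 0 2]
    by (subst integrable_density) auto
  show "(\<integral>e. e\<^sup>2 \<partial>noise \<sigma>) = \<sigma>\<^sup>2"
    unfolding noise_def using integral_normal_moment_even[OF assms, of 0 1]
    by (subst integral_density) auto
qed

lemma integral_pair_measure_mult:
  fixes u :: "'a \<Rightarrow> real" and v :: "'b \<Rightarrow> real"
  assumes "sigma_finite_measure M1" "sigma_finite_measure M2"
    and u: "integrable M1 u" and v: "integrable M2 v"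
  shows "integrable (M1 \<Otimes>\<^sub>M M2) (\<lambda>z. u (fst z) * v (snd z))"
    and "(\<integral>z. u (fst z) * v (snd z) \<partial>(M1 \<Otimes>\<^sub>M M2)) = (\<integral>x. u x \<partial>M1) * (\<integral>y. v y \<partial>M2)"
proof -
  interpret pair_sigma_finite M1 M2 using assms(1,2) by (auto simp: pair_sigma_finite_def)
  have [measurable]: "u \<in> borel_measurable M1" "v \<in> borel_measurable M2" using u v by auto
  have "(\<integral>\<^sup>+z. ennreal (norm (u (fst z) * v (snd z))) \<partial>(M1 \<Otimes>\<^sub>M M2))
      = (\<integral>\<^sup>+x. (\<integral>\<^sup>+y. ennreal (norm (u x)) * ennreal (norm (v y)) \<partial>M2) \<partial>M1)"
    by (subst M2.nn_integral_fst[symmetric]) (auto simp: abs_mult ennreal_mult)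
  also have "\<dots> = (\<integral>\<^sup>+x. ennreal (norm (u x)) \<partial>M1) * (\<integral>\<^sup>+y. ennreal (norm (v y)) \<partial>M2)"
    by (simp add: nn_integral_cmult nn_integral_multc)
  also have "\<dots> < \<infinity>"
    using u v by (simp add: integrable_iff_bounded ennreal_mult_less_top)
  finally show integrable: "integrable (M1 \<Otimes>\<^sub>M M2) (\<lambda>z. u (fst z) * v (snd z))"
    by (simp add: integrable_iff_bounded)
  show "(\<integral>z. u (fst z) * v (snd z) \<partial>(M1 \<Otimes>\<^sub>M M2)) = (\<integral>x. u x \<partial>M1) * (\<integral>y. v y \<partial>M2)"
    using integral_fst'[OF integrable] by simp
qed

text \<open>Both the risk and the Kullback--Leibler divergence reduce to integrals of this shape:
  the cross term vanishes because the noise is centred.\<close>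
lemma integral_quadratic_in_noise:
  fixes a b :: "'a \<Rightarrow> real"
  assumes "prob_space M" "\<sigma> > 0"
    and [measurable]: "a \<in> borel_measurable M" "b \<in> borel_measurable M"
    and "\<And>x. \<bar>a x\<bar> \<le> Ba" "\<And>x. \<bar>b x\<bar> \<le> Bb"
  shows "integrable (M \<Otimes>\<^sub>M noise \<sigma>) (\<lambda>z. a (fst z) + b (fst z) * snd z + c * (snd z)\<^sup>2)"
    and "(\<integral>z. a (fst z) + b (fst z) * snd z + c * (snd z)\<^sup>2 \<partial>(M \<Otimes>\<^sub>M noise \<sigma>))
        = (\<integral>x. a x \<partial>M) + c * \<sigma>\<^sup>2"
proof -
  interpret M: prob_space M by fact
  interpret N: prob_space "noise \<sigma>" by (rule prob_space_noise) fact
  have sf: "sigma_finite_measure M" "sigma_finite_measure (noise \<sigma>)" by unfold_locales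
  have "integrable M a"
    using assms(5) by (intro M.integrable_const_bound[where B=Ba]) auto
  have "integrable M b"
    using assms(6) by (intro M.integrable_const_bound[where B=Bb]) auto
  note A = integral_pair_measure_mult[OF sf \<open>integrable M a\<close> N.integrable_const[of 1]]
  note B = integral_pair_measure_mult[OF sf \<open>integrable M b\<close> noise_first_moment(1)[OF assms(2)]]
  note C = integral_pair_measure_mult[OF sf M.integrable_const[of c] noise_second_moment(1)[OF assms(2)]]
  have split: "(\<lambda>z. a (fst z) + b (fst z) * snd z + c * (snd z)\<^sup>2)
      = (\<lambda>z. (a (fst z) * 1 + b (fst z) * snd z) + c * (snd z)\<^sup>2)"
    by simp
  show "integrable (M \<Otimes>\<^sub>M noise \<sigma>) (\<lambda>z. a (fst z) + b (fst z) * snd z + c * (snd z)\<^sup>2)"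
    unfolding split using A(1) B(1) C(1) by auto
  show "(\<integral>z. a (fst z) + b (fst z) * snd z + c * (snd z)\<^sup>2 \<partial>(M \<Otimes>\<^sub>M noise \<sigma>))
      = (\<integral>x. a x \<partial>M) + c * \<sigma>\<^sup>2"
    unfolding split using A B C noise_first_moment(2)[OF assms(2)] noise_second_moment(2)[OF assms(2)]
    by (simp add: N.prob_space M.prob_space)
qed

lemma measurable_add_noise:
  assumes [measurable]: "g \<in> borel_measurable (PiM {1..p} (\<lambda>_. borel))"
  shows "(\<lambda>(x, e). (x, g x + e)) \<in> measurable (X_dist p \<Otimes>\<^sub>M noise \<sigma>) (obs_space p)"
proof -
  have "sets (X_dist p \<Otimes>\<^sub>M noise \<sigma>) = sets (PiM {1..p} (\<lambda>_. borel) \<Otimes>\<^sub>M borel)"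
    by (intro sets_pair_measure_cong sets_X_dist) (simp add: noise_def)
  moreover have "(\<lambda>(x, e). (x, g x + e)) \<in> measurable (PiM {1..p} (\<lambda>_. borel) \<Otimes>\<^sub>M borel) (obs_space p)"
    unfolding obs_space_def by measurable
  ultimately show ?thesis
    using measurable_cong_sets by blast
qed

lemma D_dist_integral:
  fixes F :: "(nat \<Rightarrow> real) \<times> real \<Rightarrow> real"
  assumes "g \<in> borel_measurable (PiM {1..p} (\<lambda>_. borel))" "F \<in> borel_measurable (obs_space p)"
  shows "integrable (D_dist p \<sigma> g) F
      \<longleftrightarrow> integrable (X_dist p \<Otimes>\<^sub>M noise \<sigma>) (\<lambda>z. F (fst z, g (fst z) + snd z))"
    and "(\<integral>z. F z \<partial>D_dist p \<sigma> g) = (\<integral>z. F (fst z, g (fst z) + snd z) \<partial>(X_dist p \<Otimes>\<^sub>M noise \<sigma>))"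
  unfolding D_dist_def
  using integrable_distr_eq[OF measurable_add_noise[OF assms(1)] assms(2)]
    integral_distr[OF measurable_add_noise[OF assms(1)] assms(2)]
  by (simp_all add: case_prod_beta)

lemma risk_D_dist:
  assumes "\<sigma> > 0"
    and [measurable]: "g \<in> borel_measurable (PiM {1..p} (\<lambda>_. borel))"
      "h \<in> borel_measurable (PiM {1..p} (\<lambda>_. borel))"
    and "\<And>x. \<bar>g x\<bar> \<le> Bg" "\<And>x. \<bar>h x\<bar> \<le> Bh"
  shows "risk (D_dist p \<sigma> g) h = (\<integral>x. (g x - h x)\<^sup>2 / 2 \<partial>X_dist p) + \<sigma>\<^sup>2 / 2"
proof -
  have diff_le: "\<bar>g x - h x\<bar> \<le> Bg + Bh" for x
    using assms(4,5)[of x] by linarith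
  have sq: "(g x - h x)\<^sup>2 \<le> (Bg + Bh)\<^sup>2" for x
    using diff_le by (metis abs_le_square_iff abs_of_nonneg abs_ge_zero order_trans power2_abs)
  have sq_le: "\<bar>(g x - h x)\<^sup>2 / 2\<bar> \<le> (Bg + Bh)\<^sup>2" for x
    using sq[of x] zero_le_power2[of "g x - h x"] by linarith
  have "hloss h \<in> borel_measurable (obs_space p)"
    unfolding hloss_def obs_space_def by measurable
  then have "risk (D_dist p \<sigma> g) h = (\<integral>z. hloss h (fst z, g (fst z) + snd z) \<partial>(X_dist p \<Otimes>\<^sub>M noise \<sigma>))"
    unfolding risk_def by (rule D_dist_integral(2)[OF assms(2)])
  also have "\<dots> = (\<integral>z. (g (fst z) - h (fst z))\<^sup>2 / 2 + (g (fst z) - h (fst z)) * snd z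
      + 1/2 * (snd z)\<^sup>2 \<partial>(X_dist p \<Otimes>\<^sub>M noise \<sigma>))"
    by (simp add: hloss_def power2_eq_square field_simps)
  also have "\<dots> = (\<integral>x. (g x - h x)\<^sup>2 / 2 \<partial>X_dist p) + 1/2 * \<sigma>\<^sup>2"
  proof (rule integral_quadratic_in_noise(2)[OF prob_space_X_dist \<open>\<sigma> > 0\<close> _ _ sq_le diff_le])
    show "(\<lambda>x. (g x - h x)\<^sup>2 / 2) \<in> borel_measurable (X_dist p)"
      "(\<lambda>x. g x - h x) \<in> borel_measurable (X_dist p)"
      unfolding measurable_X_dist_iff by measurable
  qed
  finally show ?thesis by simp
qed

lemma GclsE:
  assumes "g \<in> Gcls p q k"
  obtains A where "g = gA A" "A \<subseteq> {1..q} \<times> {1..p}" "inj_on snd A" "card A \<le> k + 1"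
  using assms unfolding Gcls_def admissible_def by auto

lemma Gcls_measurable:
  assumes "g \<in> Gcls p q k"
  shows "g \<in> borel_measurable (PiM {1..p} (\<lambda>_. borel))"
proof -
  obtain A where "g = gA A" "A \<subseteq> {1..q} \<times> {1..p}"
    using assms by (rule GclsE)
  then show ?thesis
    using gA_measurable[of A p] by auto
qed

lemma abs_Gcls_le:
  assumes "g \<in> Gcls p q k"
  shows "\<bar>g x\<bar> \<le> sqrt 2 ^ (k + 1)"
proof -
  obtain A where "g = gA A" "card A \<le> k + 1"
    using assms by (rule GclsE)
  then show ?thesis
    using abs_gA_le[of A x] power_increasing[of "card A" "k + 1" "sqrt 2"] by simp
qed

lemma integrable_Gcls_mult:
  assumes "g \<in> Gcls p q k" "h \<in> Gcls p q k"
  shows "integrable (X_dist p) (\<lambda>x. g x * h x)"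
proof -
  interpret prob_space "X_dist p" by (rule prob_space_X_dist)
  have [measurable]: "g \<in> borel_measurable (PiM {1..p} (\<lambda>_. borel))"
    "h \<in> borel_measurable (PiM {1..p} (\<lambda>_. borel))"
    using Gcls_measurable assms by blast+
  have "(\<lambda>x. g x * h x) \<in> borel_measurable (X_dist p)"
    unfolding measurable_X_dist_iff by measurable
  moreover have "\<bar>g x * h x\<bar> \<le> sqrt 2 ^ (k + 1) * sqrt 2 ^ (k + 1)" for x
    unfolding abs_mult by (intro mult_mono abs_Gcls_le[OF assms(1)] abs_Gcls_le[OF assms(2)]) auto
  ultimately show ?thesis
    by (intro integrable_const_bound[where B="sqrt 2 ^ (k + 1) * sqrt 2 ^ (k + 1)"]) auto
qed

lemma Gcls_orthonormal:
  assumes "g \<in> Gcls p q k" "h \<in> Gcls p q k"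
  shows "(\<integral>x. g x * h x \<partial>X_dist p) = (if g = h then 1 else 0)"
proof -
  obtain A where A: "g = gA A" "A \<subseteq> {1..q} \<times> {1..p}" "inj_on snd A"
    using assms(1) by (rule GclsE)
  obtain B where B: "h = gA B" "B \<subseteq> {1..q} \<times> {1..p}" "inj_on snd B"
    using assms(2) by (rule GclsE)
  have "A = B \<longleftrightarrow> g = h"
    using gA_orthonormal[OF A(2,3) A(2,3)] gA_orthonormal[OF A(2,3) B(2,3)] A(1) B(1)
    by (auto split: if_splits)
  then show ?thesis
    using gA_orthonormal[OF A(2,3) B(2,3)] A(1) B(1) by simp
qed

text \<open>Orthonormality gives \<open>\<integral> (g - h)\<^sup>2 = 2\<close> for distinct \<open>g\<close>, \<open>h\<close> in the class.\<close>
lemma risk_excess_Gcls: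
  assumes "\<sigma> > 0" "g \<in> Gcls p q k" "h \<in> Gcls p q k" "h \<noteq> g"
  shows "risk (D_dist p \<sigma> g) h - risk (D_dist p \<sigma> g) g = 1"
proof -
  have risk: "risk (D_dist p \<sigma> g) f = (\<integral>x. (g x - f x)\<^sup>2 / 2 \<partial>X_dist p) + \<sigma>\<^sup>2 / 2"
    if "f \<in> Gcls p q k" for f
    using risk_D_dist[OF assms(1) Gcls_measurable[OF assms(2)] Gcls_measurable[OF that]
        abs_Gcls_le[OF assms(2)] abs_Gcls_le[OF that]] .
  have "(\<lambda>x. (g x - h x)\<^sup>2 / 2) = (\<lambda>x. (g x * g x - 2 * (g x * h x) + h x * h x) / 2)"
    by (simp add: fun_eq_iff power2_eq_square algebra_simps)
  then have "(\<integral>x. (g x - h x)\<^sup>2 / 2 \<partial>X_dist p)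
      = ((\<integral>x. g x * g x \<partial>X_dist p) - 2 * (\<integral>x. g x * h x \<partial>X_dist p) + (\<integral>x. h x * h x \<partial>X_dist p)) / 2"
    using integrable_Gcls_mult[OF assms(2) assms(2)] integrable_Gcls_mult[OF assms(2) assms(3)]
      integrable_Gcls_mult[OF assms(3) assms(3)]
    by simp
  also have "\<dots> = 1"
    using Gcls_orthonormal[OF assms(2) assms(2)] Gcls_orthonormal[OF assms(2) assms(3)]
      Gcls_orthonormal[OF assms(3) assms(3)] assms(4) by simp
  finally show ?thesis
    using risk[OF assms(2)] risk[OF assms(3)] by simp
qed

section \<open>Likelihood ratio and Kullback--Leibler divergence\<close>

lemma sets_D_dist [measurable_cong]: "sets (D_dist p \<sigma> g) = sets (obs_space p)"
  by (simp add: D_dist_def)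

lemma sets_sample_dist [measurable_cong]: "sets (sample_dist n p \<sigma> g) = sets (sample_space n p)"
  unfolding sample_dist_def sample_space_def by (intro sets_PiM_cong) (auto simp: sets_D_dist)

lemma prob_space_D_dist:
  assumes "\<sigma> > 0" "g \<in> borel_measurable (PiM {1..p} (\<lambda>_. borel))"
  shows "prob_space (D_dist p \<sigma> g)"
proof -
  interpret pair_prob_space "X_dist p" "noise \<sigma>"
    using prob_space_X_dist prob_space_noise[OF assms(1)] by (simp add: pair_prob_space_def pair_sigma_finite_def prob_space_imp_sigma_finite)
  show ?thesis
    unfolding D_dist_def by (rule prob_space_distr[OF measurable_add_noise[OF assms(2)]])
qed

lemma prob_space_sample_dist:
  "\<sigma> > 0 \<Longrightarrow> g \<in> borel_measurable (PiM {1..p} (\<lambda>_. borel)) \<Longrightarrow> prob_space (sample_dist n p \<sigma> g)"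
  unfolding sample_dist_def using prob_space_D_dist by (intro prob_space_PiM) auto

text \<open>The density of an observation under \<open>g\<close> relative to pure noise (\<open>g = 0\<close>).\<close>
definition obs_lr :: "real \<Rightarrow> ((nat \<Rightarrow> real) \<Rightarrow> real) \<Rightarrow> (nat \<Rightarrow> real) \<times> real \<Rightarrow> real" where
  "obs_lr \<sigma> g z = exp ((2 * snd z * g (fst z) - (g (fst z))\<^sup>2) / (2 * \<sigma>\<^sup>2))"

definition sample_lr :: "real \<Rightarrow> nat \<Rightarrow> ((nat \<Rightarrow> real) \<Rightarrow> real) \<Rightarrow> (nat \<Rightarrow> (nat \<Rightarrow> real) \<times> real) \<Rightarrow> real" where
  "sample_lr \<sigma> n g S = (\<Prod>i<n. obs_lr \<sigma> g (S i))"

lemma obs_lr_measurable [measurable]: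
  assumes [measurable]: "g \<in> borel_measurable (PiM {1..p} (\<lambda>_. borel))"
  shows "obs_lr \<sigma> g \<in> borel_measurable (obs_space p)"
  unfolding obs_lr_def obs_space_def by measurable

lemma sample_lr_measurable:
  assumes [measurable]: "g \<in> borel_measurable (PiM {1..p} (\<lambda>_. borel))"
  shows "sample_lr \<sigma> n g \<in> borel_measurable (sample_space n p)"
  unfolding sample_lr_def sample_space_def by measurable

lemma sample_lr_pos: "sample_lr \<sigma> n g S > 0"
  by (auto simp: sample_lr_def obs_lr_def intro!: prod_pos)

lemma normal_density_shift:
  "normal_density 0 \<sigma> (y - a) = normal_density 0 \<sigma> y * exp ((2 * y * a - a\<^sup>2) / (2 * \<sigma>\<^sup>2))"
proof -
  have "- (y - a - 0)\<^sup>2 / (2 * \<sigma>\<^sup>2) = - (y - 0)\<^sup>2 / (2 * \<sigma>\<^sup>2) + (2 * y * a - a\<^sup>2) / (2 * \<sigma>\<^sup>2)"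
    by (simp add: power2_eq_square add_divide_distrib[symmetric] diff_divide_distrib[symmetric] algebra_simps)
  then show ?thesis
    unfolding normal_density_def by (simp add: exp_add[symmetric])
qed

lemma nn_integral_D_dist:
  fixes F :: "(nat \<Rightarrow> real) \<times> real \<Rightarrow> ennreal"
  assumes "\<sigma> > 0"
    and [measurable]: "g \<in> borel_measurable (PiM {1..p} (\<lambda>_. borel))" "F \<in> borel_measurable (obs_space p)"
  shows "(\<integral>\<^sup>+z. F z \<partial>D_dist p \<sigma> g)
      = (\<integral>\<^sup>+x. (\<integral>\<^sup>+y. normal_density 0 \<sigma> (y - g x) * F (x, y) \<partial>lborel) \<partial>X_dist p)"
proof -
  interpret N: prob_space "noise \<sigma>" by (rule prob_space_noise) fact
  have shifted: "(\<lambda>z. F (fst z, g (fst z) + snd z)) \<in> borel_measurable (X_dist p \<Otimes>\<^sub>M noise \<sigma>)"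
    using measurable_comp[OF measurable_add_noise[OF assms(2)] assms(3)] by (simp add: comp_def case_prod_beta)
  have "(\<integral>\<^sup>+z. F z \<partial>D_dist p \<sigma> g) = (\<integral>\<^sup>+x. (\<integral>\<^sup>+e. F (x, g x + e) \<partial>noise \<sigma>) \<partial>X_dist p)"
    unfolding D_dist_def using N.nn_integral_fst[OF shifted]
    by (simp add: nn_integral_distr[OF measurable_add_noise[OF assms(2)]] case_prod_beta)
  also have "\<dots> = (\<integral>\<^sup>+x. (\<integral>\<^sup>+y. normal_density 0 \<sigma> (y - g x) * F (x, y) \<partial>lborel) \<partial>X_dist p)"
  proof (intro nn_integral_cong)
    fix x assume "x \<in> space (X_dist p)"
    then have [measurable]: "(\<lambda>y. F (x, y)) \<in> borel_measurable borel"
      using measurable_Pair2[OF assms(3)[unfolded obs_space_def]] sets_eq_imp_space_eq[OF sets_X_dist] by auto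
    have "(\<integral>\<^sup>+y. normal_density 0 \<sigma> (y - g x) * F (x, y) \<partial>lborel)
        = (\<integral>\<^sup>+e. normal_density 0 \<sigma> e * F (x, g x + e) \<partial>lborel)"
      using nn_integral_real_affine[where c=1 and t="g x" and f="\<lambda>y. normal_density 0 \<sigma> (y - g x) * F (x, y)"]
      by simp
    then show "(\<integral>\<^sup>+e. F (x, g x + e) \<partial>noise \<sigma>) = (\<integral>\<^sup>+y. normal_density 0 \<sigma> (y - g x) * F (x, y) \<partial>lborel)"
      unfolding noise_def by (simp add: nn_integral_density)
  qed
  finally show ?thesis .
qed

lemma D_dist_eq_density:
  assumes "\<sigma> > 0" and [measurable]: "g \<in> borel_measurable (PiM {1..p} (\<lambda>_. borel))"
  shows "D_dist p \<sigma> g = density (D_dist p \<sigma> (\<lambda>_. 0)) (\<lambda>z. ennreal (obs_lr \<sigma> g z))"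
proof (rule measure_eqI)
  fix C assume "C \<in> sets (D_dist p \<sigma> g)"
  then have [measurable]: "C \<in> sets (obs_space p)" by (simp add: sets_D_dist)
  have "emeasure (D_dist p \<sigma> g) C = (\<integral>\<^sup>+z. indicator C z \<partial>D_dist p \<sigma> g)"
    by (simp add: sets_D_dist)
  also have "\<dots> = (\<integral>\<^sup>+x. (\<integral>\<^sup>+y. ennreal (normal_density 0 \<sigma> (y - g x)) * indicator C (x, y) \<partial>lborel) \<partial>X_dist p)"
    by (rule nn_integral_D_dist[OF assms(1,2)]) simp
  also have "\<dots> = (\<integral>\<^sup>+x. (\<integral>\<^sup>+y. ennreal (normal_density 0 \<sigma> (y - 0))
      * (ennreal (obs_lr \<sigma> g (x, y)) * indicator C (x, y)) \<partial>lborel) \<partial>X_dist p)"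
    by (intro nn_integral_cong) (simp add: normal_density_shift obs_lr_def ennreal_mult' mult.assoc)
  also have "\<dots> = (\<integral>\<^sup>+z. ennreal (obs_lr \<sigma> g z) * indicator C z \<partial>D_dist p \<sigma> (\<lambda>_. 0))"
    by (rule nn_integral_D_dist[OF assms(1), symmetric]) measurable
  also have "\<dots> = emeasure (density (D_dist p \<sigma> (\<lambda>_. 0)) (\<lambda>z. ennreal (obs_lr \<sigma> g z))) C"
    by (simp add: emeasure_density sets_D_dist)
  finally show "emeasure (D_dist p \<sigma> g) C = emeasure (density (D_dist p \<sigma> (\<lambda>_. 0)) (\<lambda>z. ennreal (obs_lr \<sigma> g z))) C" .
qed (simp add: sets_D_dist)

lemma indicator_PiE_eq_prod:
  assumes "finite I" "S \<in> extensional I"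
  shows "indicator (PiE I A) S = (\<Prod>i\<in>I. indicator (A i) (S i) :: ennreal)"
proof (cases "S \<in> PiE I A")
  case False
  then obtain i where "i \<in> I" "S i \<notin> A i"
    using assms(2) by (auto simp: PiE_def)
  then show ?thesis
    using False assms(1) by (auto intro!: prod_zero bexI[of _ i])
qed (auto simp: PiE_def Pi_def)

lemma PiM_density_identical:
  fixes f :: "'a \<Rightarrow> ennreal"
  assumes "finite I" "prob_space M" "prob_space (density M f)"
    and [measurable]: "f \<in> borel_measurable M"
  shows "PiM I (\<lambda>_. density M f) = density (PiM I (\<lambda>_. M)) (\<lambda>S. \<Prod>i\<in>I. f (S i))"
proof -
  interpret M: product_prob_space "\<lambda>_. M" I
    using assms(2) by (simp add: product_prob_space_def product_prob_space_axioms_def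
        product_sigma_finite_def prob_space_imp_sigma_finite)
  interpret D: product_prob_space "\<lambda>_. density M f" I
    using assms(3) by (simp add: product_prob_space_def product_prob_space_axioms_def
        product_sigma_finite_def prob_space_imp_sigma_finite)
  have "density (PiM I (\<lambda>_. M)) (\<lambda>S. \<Prod>i\<in>I. f (S i)) = PiM I (\<lambda>_. density M f)"
  proof (rule D.PiM_eqI[OF assms(1)])
    show "sets (density (PiM I (\<lambda>_. M)) (\<lambda>S. \<Prod>i\<in>I. f (S i))) = sets (PiM I (\<lambda>_. density M f))"
      unfolding sets_density by (intro sets_PiM_cong) simp_all
    fix A assume "\<And>i. i \<in> I \<Longrightarrow> A i \<in> sets (density M f)"
    then have [measurable]: "\<And>i. i \<in> I \<Longrightarrow> A i \<in> sets M" by simp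
    have "PiE I A \<in> sets (PiM I (\<lambda>_. M))"
      by (intro sets_PiM_I_finite assms(1)) auto
    then have "emeasure (density (PiM I (\<lambda>_. M)) (\<lambda>S. \<Prod>i\<in>I. f (S i))) (PiE I A)
        = (\<integral>\<^sup>+S. (\<Prod>i\<in>I. f (S i) * indicator (A i) (S i)) \<partial>PiM I (\<lambda>_. M))"
      using assms(1)
      by (auto simp: emeasure_density space_PiM PiE_iff indicator_PiE_eq_prod prod.distrib
          intro!: nn_integral_cong)
    also have "\<dots> = (\<Prod>i\<in>I. (\<integral>\<^sup>+x. f x * indicator (A i) x \<partial>M))"
      by (intro M.product_nn_integral_prod assms(1)) auto
    also have "\<dots> = (\<Prod>i\<in>I. emeasure (density M f) (A i))"
      by (intro prod.cong refl) (simp add: emeasure_density)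
    finally show "emeasure (density (PiM I (\<lambda>_. M)) (\<lambda>S. \<Prod>i\<in>I. f (S i))) (PiE I A)
        = (\<Prod>i\<in>I. emeasure (density M f) (A i))" .
  qed
  then show ?thesis by simp
qed

lemma sample_dist_eq_density:
  assumes "\<sigma> > 0" and [measurable]: "g \<in> borel_measurable (PiM {1..p} (\<lambda>_. borel))"
  shows "sample_dist n p \<sigma> g = density (sample_dist n p \<sigma> (\<lambda>_. 0)) (\<lambda>S. ennreal (sample_lr \<sigma> n g S))"
proof -
  have "sample_dist n p \<sigma> g = PiM {..<n} (\<lambda>_. density (D_dist p \<sigma> (\<lambda>_. 0)) (\<lambda>z. ennreal (obs_lr \<sigma> g z)))"
    unfolding sample_dist_def D_dist_eq_density[OF assms] ..
  also have "\<dots> = density (sample_dist n p \<sigma> (\<lambda>_. 0)) (\<lambda>S. \<Prod>i<n. ennreal (obs_lr \<sigma> g (S i)))"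
    unfolding sample_dist_def
  proof (rule PiM_density_identical)
    show "prob_space (D_dist p \<sigma> (\<lambda>_. 0))"
      by (rule prob_space_D_dist[OF assms(1)]) simp
    show "prob_space (density (D_dist p \<sigma> (\<lambda>_. 0)) (\<lambda>z. ennreal (obs_lr \<sigma> g z)))"
      using prob_space_D_dist[OF assms] unfolding D_dist_eq_density[OF assms] .
  qed (simp_all add: sets_D_dist)
  also have "(\<lambda>S. \<Prod>i<n. ennreal (obs_lr \<sigma> g (S i))) = (\<lambda>S. ennreal (sample_lr \<sigma> n g S))"
    by (auto simp: prod_ennreal obs_lr_def sample_lr_def)
  finally show ?thesis .
qed

lemma integral_PiM_component:
  fixes h :: "'a \<Rightarrow> real"
  assumes "prob_space M" "i \<in> I" "h \<in> borel_measurable M"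
  shows "integrable (PiM I (\<lambda>_. M)) (\<lambda>S. h (S i)) \<longleftrightarrow> integrable M h"
    and "(\<integral>S. h (S i) \<partial>PiM I (\<lambda>_. M)) = (\<integral>x. h x \<partial>M)"
proof -
  have distr: "distr (PiM I (\<lambda>_. M)) M (\<lambda>S. S i) = M"
    using distr_PiM_component[of I "\<lambda>_. M" i] assms(1,2) by auto
  have component: "(\<lambda>S. S i) \<in> measurable (PiM I (\<lambda>_. M)) M"
    using assms(2) by simp
  show "integrable (PiM I (\<lambda>_. M)) (\<lambda>S. h (S i)) \<longleftrightarrow> integrable M h"
    using integrable_distr_eq[OF component assms(3)] distr by simp
  show "(\<integral>S. h (S i) \<partial>PiM I (\<lambda>_. M)) = (\<integral>x. h x \<partial>M)"
    using integral_distr[OF component assms(3)] distr by simp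
qed

lemma kl_obs_lr:
  assumes "\<sigma> > 0" and [measurable]: "g \<in> borel_measurable (PiM {1..p} (\<lambda>_. borel))"
    and bound: "\<And>x. \<bar>g x\<bar> \<le> B"
  shows "integrable (D_dist p \<sigma> g) (\<lambda>z. ln (obs_lr \<sigma> g z))"
    and "(\<integral>z. ln (obs_lr \<sigma> g z) \<partial>D_dist p \<sigma> g) = (\<integral>x. (g x)\<^sup>2 \<partial>X_dist p) / (2 * \<sigma>\<^sup>2)"
proof -
  have sq: "\<bar>(g x)\<^sup>2 / (2 * \<sigma>\<^sup>2)\<bar> \<le> B\<^sup>2 / (2 * \<sigma>\<^sup>2)" for x
  proof -
    have "(g x)\<^sup>2 \<le> B\<^sup>2"
      using power_mono[OF bound abs_ge_zero, of x 2] by simp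
    then show ?thesis
      by (simp add: divide_right_mono)
  qed
  have lin: "\<bar>g x / \<sigma>\<^sup>2\<bar> \<le> B / \<sigma>\<^sup>2" for x
    using bound[of x] \<open>\<sigma> > 0\<close> by (simp add: abs_div divide_right_mono)
  have meas: "(\<lambda>x. (g x)\<^sup>2 / (2 * \<sigma>\<^sup>2)) \<in> borel_measurable (X_dist p)"
    "(\<lambda>x. g x / \<sigma>\<^sup>2) \<in> borel_measurable (X_dist p)"
    unfolding measurable_X_dist_iff by measurable
  have "ln (obs_lr \<sigma> g (x, g x + e)) = (g x)\<^sup>2 / (2 * \<sigma>\<^sup>2) + g x / \<sigma>\<^sup>2 * e + 0 * e\<^sup>2" for x e
    using \<open>\<sigma> > 0\<close> by (simp add: obs_lr_def power2_eq_square field_simps)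
  then have shifted: "(\<lambda>z. ln (obs_lr \<sigma> g (fst z, g (fst z) + snd z)))
      = (\<lambda>z. (g (fst z))\<^sup>2 / (2 * \<sigma>\<^sup>2) + g (fst z) / \<sigma>\<^sup>2 * snd z + 0 * (snd z)\<^sup>2)"
    by auto
  note quadratic = integral_quadratic_in_noise[OF prob_space_X_dist \<open>\<sigma> > 0\<close> meas sq lin]
  have ln_meas: "(\<lambda>z. ln (obs_lr \<sigma> g z)) \<in> borel_measurable (obs_space p)"
    by measurable
  show "integrable (D_dist p \<sigma> g) (\<lambda>z. ln (obs_lr \<sigma> g z))"
    unfolding D_dist_integral(1)[OF assms(2) ln_meas] shifted by (rule quadratic(1))
  have "(\<integral>z. ln (obs_lr \<sigma> g z) \<partial>D_dist p \<sigma> g)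
      = (\<integral>z. (g (fst z))\<^sup>2 / (2 * \<sigma>\<^sup>2) + g (fst z) / \<sigma>\<^sup>2 * snd z + 0 * (snd z)\<^sup>2 \<partial>(X_dist p \<Otimes>\<^sub>M noise \<sigma>))"
    unfolding D_dist_integral(2)[OF assms(2) ln_meas] shifted ..
  also have "\<dots> = (\<integral>x. (g x)\<^sup>2 / (2 * \<sigma>\<^sup>2) \<partial>X_dist p) + 0 * \<sigma>\<^sup>2"
    by (rule quadratic(2))
  also have "\<dots> = (\<integral>x. (g x)\<^sup>2 \<partial>X_dist p) / (2 * \<sigma>\<^sup>2)"
    by (simp only: integral_divide_zero mult_zero_left add_0_right)
  finally show "(\<integral>z. ln (obs_lr \<sigma> g z) \<partial>D_dist p \<sigma> g) = (\<integral>x. (g x)\<^sup>2 \<partial>X_dist p) / (2 * \<sigma>\<^sup>2)" .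
qed

lemma kl_sample_lr:
  assumes "\<sigma> > 0" and [measurable]: "g \<in> borel_measurable (PiM {1..p} (\<lambda>_. borel))"
    and "\<And>x. \<bar>g x\<bar> \<le> B"
  shows "integrable (sample_dist n p \<sigma> g) (\<lambda>S. ln (sample_lr \<sigma> n g S))"
    and "(\<integral>S. ln (sample_lr \<sigma> n g S) \<partial>sample_dist n p \<sigma> g)
        = n * (\<integral>x. (g x)\<^sup>2 \<partial>X_dist p) / (2 * \<sigma>\<^sup>2)"
proof -
  have ln_sample_lr: "ln (sample_lr \<sigma> n g S) = (\<Sum>i<n. ln (obs_lr \<sigma> g (S i)))" for S
    unfolding sample_lr_def by (subst ln_prod) (auto simp: obs_lr_def)
  have [measurable]: "(\<lambda>z. ln (obs_lr \<sigma> g z)) \<in> borel_measurable (D_dist p \<sigma> g)"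
    by measurable
  note component = integral_PiM_component[OF prob_space_D_dist[OF assms(1,2)] _ this]
  note kl = kl_obs_lr[OF assms]
  have integrable: "integrable (sample_dist n p \<sigma> g) (\<lambda>S. ln (obs_lr \<sigma> g (S i)))" if "i < n" for i
    unfolding sample_dist_def using that by (simp add: component(1) kl(1))
  then show "integrable (sample_dist n p \<sigma> g) (\<lambda>S. ln (sample_lr \<sigma> n g S))"
    unfolding ln_sample_lr by (intro Bochner_Integration.integrable_sum) simp
  have "(\<integral>S. ln (sample_lr \<sigma> n g S) \<partial>sample_dist n p \<sigma> g)
      = (\<Sum>i<n. (\<integral>S. ln (obs_lr \<sigma> g (S i)) \<partial>sample_dist n p \<sigma> g))"
    unfolding ln_sample_lr using integrable by (intro Bochner_Integration.integral_sum) simp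
  also have "\<dots> = (\<Sum>i<n. (\<integral>x. (g x)\<^sup>2 \<partial>X_dist p) / (2 * \<sigma>\<^sup>2))"
    unfolding sample_dist_def by (intro sum.cong refl) (simp add: component(2) kl(2))
  finally show "(\<integral>S. ln (sample_lr \<sigma> n g S) \<partial>sample_dist n p \<sigma> g)
      = n * (\<integral>x. (g x)\<^sup>2 \<partial>X_dist p) / (2 * \<sigma>\<^sup>2)"
    by simp
qed

section \<open>Change of measure and Fano's inequality\<close>

lemma integral_density_divide:
  fixes Q :: "'a measure" and L h :: "'a \<Rightarrow> real"
  assumes [measurable]: "L \<in> borel_measurable Q"
    and L_pos: "\<And>x. x \<in> space Q \<Longrightarrow> L x > 0" and h: "integrable Q h"
  shows "integrable (density Q (\<lambda>x. ennreal (L x))) (\<lambda>x. h x / L x)"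
    and "(\<integral>x. h x / L x \<partial>density Q (\<lambda>x. ennreal (L x))) = (\<integral>x. h x \<partial>Q)"
proof -
  have [measurable]: "h \<in> borel_measurable Q"
    using h by auto
  have cancel: "L x *\<^sub>R (h x / L x) = h x" if "x \<in> space Q" for x
    using L_pos[OF that] by simp
  have "integrable Q (\<lambda>x. L x *\<^sub>R (h x / L x))"
    using h by (rule Bochner_Integration.integrable_cong[THEN iffD1, rotated 2]) (simp_all only: cancel)
  then show "integrable (density Q (\<lambda>x. ennreal (L x))) (\<lambda>x. h x / L x)"
    using L_pos by (subst integrable_density) (auto intro: less_imp_le)
  have "(\<integral>x. h x / L x \<partial>density Q (\<lambda>x. ennreal (L x))) = (\<integral>x. L x *\<^sub>R (h x / L x) \<partial>Q)"
    using L_pos by (intro integral_density) (auto intro: less_imp_le)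
  also have "\<dots> = (\<integral>x. h x \<partial>Q)"
    by (intro Bochner_Integration.integral_cong refl cancel)
  finally show "(\<integral>x. h x / L x \<partial>density Q (\<lambda>x. ennreal (L x))) = (\<integral>x. h x \<partial>Q)" .
qed

text \<open>The Donsker--Varadhan inequality for the test function \<open>c \<cdot> indicator A\<close>: integrate
  \<open>ln u \<le> u - 1\<close> at \<open>u = exp (c \<cdot> indicator A) / (Z \<cdot> L)\<close> against \<open>P\<close>, where \<open>Z\<close> normalises
  \<open>exp (c \<cdot> indicator A)\<close> under \<open>Q\<close>.\<close>
lemma change_of_measure_bound:
  fixes Q :: "'a measure" and L :: "'a \<Rightarrow> real"
  assumes "prob_space Q" and L_meas [measurable]: "L \<in> borel_measurable Q"
    and L_pos: "\<And>x. x \<in> space Q \<Longrightarrow> L x > 0"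
    and P: "P = density Q (\<lambda>x. ennreal (L x))" "prob_space P"
    and ln_L: "integrable P (\<lambda>x. ln (L x))"
    and [measurable]: "A \<in> sets Q" and "c \<ge> 0"
  shows "c * measure P A \<le> (\<integral>x. ln (L x) \<partial>P) + ln (1 + (exp c - 1) * measure Q A)"
proof -
  interpret Q: prob_space Q by fact
  interpret P: prob_space P by fact
  define Z where "Z = 1 + (exp c - 1) * measure Q A"
  define f where "f x = c * indicator A x" for x
  have "exp c \<ge> 1" using \<open>c \<ge> 0\<close> by simp
  then have "Z > 0" unfolding Z_def by (smt (verit) measure_nonneg mult_nonneg_nonneg)
  have [measurable]: "f \<in> borel_measurable Q" unfolding f_def by measurable
  have f_integrable: "integrable P f"
    by (rule P.integrable_const_bound[where B=c]) (use \<open>c \<ge> 0\<close> in \<open>auto simp: P f_def indicator_def\<close>)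
  have exp_f: "(\<lambda>x. exp (f x) / Z) = (\<lambda>x. 1 / Z + (exp c - 1) / Z * indicator A x)"
    by (auto simp: f_def indicator_def fun_eq_iff add_divide_distrib[symmetric])
  have indicator_A: "integrable Q (\<lambda>x. (exp c - 1) / Z * indicator A x)"
    using Q.emeasure_finite[of A] by (intro integrable_mult_right integrable_real_indicator) (auto simp: less_top[symmetric])
  then have Q_exp_f: "integrable Q (\<lambda>x. exp (f x) / Z)"
    unfolding exp_f by (intro Bochner_Integration.integrable_add Q.integrable_const)
  have "(\<integral>x. exp (f x) / Z \<partial>Q) = 1 / Z + (exp c - 1) / Z * measure Q A"
    unfolding exp_f Bochner_Integration.integral_add[OF Q.integrable_const indicator_A] by (simp add: Q.prob_space)
  also have "\<dots> = 1"
    using \<open>Z > 0\<close> unfolding Z_def by (simp add: field_simps)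
  finally have "(\<integral>x. exp (f x) / Z \<partial>Q) = 1" .
  then have P_exp_f: "integrable P (\<lambda>x. exp (f x) / Z / L x)" "(\<integral>x. exp (f x) / Z / L x \<partial>P) = 1"
    unfolding P(1) using integral_density_divide[OF L_meas L_pos Q_exp_f] by simp_all
  have ln_le: "f x - ln (L x) - ln Z \<le> exp (f x) / Z / L x - 1" if "x \<in> space Q" for x
  proof -
    have "ln (exp (f x) / Z / L x) = f x - ln (L x) - ln Z"
      using L_pos[OF that] \<open>Z > 0\<close> by (simp add: ln_div ln_mult)
    then show ?thesis
      using ln_le_minus_one[of "exp (f x) / Z / L x"] L_pos[OF that] \<open>Z > 0\<close> by simp
  qed
  have "(\<integral>x. f x \<partial>P) = c * measure P A"
    by (simp add: f_def P)
  then have "c * measure P A - (\<integral>x. ln (L x) \<partial>P) - ln Z = (\<integral>x. f x - ln (L x) - ln Z \<partial>P)"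
    using f_integrable ln_L by (simp add: P.prob_space)
  also have "\<dots> \<le> (\<integral>x. exp (f x) / Z / L x - 1 \<partial>P)"
  proof (rule integral_mono)
    show "integrable P (\<lambda>x. f x - ln (L x) - ln Z)"
      using f_integrable ln_L by (intro Bochner_Integration.integrable_diff P.integrable_const)
    show "integrable P (\<lambda>x. exp (f x) / Z / L x - 1)"
      using P_exp_f(1) by (intro Bochner_Integration.integrable_diff P.integrable_const)
  qed (use ln_le in \<open>simp add: P(1)\<close>)
  also have "\<dots> = 0"
    using P_exp_f by (simp add: P.prob_space)
  finally show ?thesis unfolding Z_def by simp
qed

lemma ln_le_ln2_plus:
  fixes y :: real
  shows "y > 0 \<Longrightarrow> ln y \<le> ln 2 + (y - 2) / 2"
  using ln_le_minus_one[of "y / 2"] by (simp add: ln_div field_simps)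

text \<open>Fano's argument: compare each \<open>P g\<close> with the reference law \<open>Q\<close> through
  \<open>change_of_measure_bound\<close> with \<open>c = ln (card G)\<close>, and sum over the disjoint events.\<close>
lemma fano_sum_le:
  fixes Q :: "'a measure" and P :: "'b \<Rightarrow> 'a measure"
  assumes "finite G" "prob_space Q" "disjoint_family_on E G" "0 \<le> K" "K + ln 2 \<le> ln (card G) / 2"
    and E: "\<And>g. g \<in> G \<Longrightarrow> E g \<in> sets Q"
    and L: "\<And>g. g \<in> G \<Longrightarrow> L g \<in> borel_measurable Q" "\<And>g x. g \<in> G \<Longrightarrow> x \<in> space Q \<Longrightarrow> L g x > 0"
    and P: "\<And>g. g \<in> G \<Longrightarrow> P g = density Q (\<lambda>x. ennreal (L g x))" "\<And>g. g \<in> G \<Longrightarrow> prob_space (P g)"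
    and KL: "\<And>g. g \<in> G \<Longrightarrow> integrable (P g) (\<lambda>x. ln (L g x))"
      "\<And>g. g \<in> G \<Longrightarrow> (\<integral>x. ln (L g x) \<partial>P g) \<le> K"
  shows "(\<Sum>g\<in>G. measure (P g) (E g)) \<le> card G / 2"
proof -
  interpret Q: prob_space Q by fact
  define M where "M = real (card G)"
  have "ln M > 0"
    using assms(4,5) ln_gt_zero[of 2] unfolding M_def by linarith
  then have "M > 0"
    by (cases "card G = 0") (auto simp: M_def)
  with \<open>ln M > 0\<close> have "M > 1"
    by (simp add: ln_gt_zero_iff)
  have "(\<Sum>g\<in>G. measure Q (E g)) = measure Q (\<Union>g\<in>G. E g)"
    using assms(1,3) E by (intro measure_finite_Union[symmetric]) (auto simp: Q.emeasure_eq_measure)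
  then have sum_Q: "(\<Sum>g\<in>G. measure Q (E g)) \<le> 1"
    by simp
  have single: "ln M * measure (P g) (E g) \<le> K + ln 2 - 1/2 + (M - 1) / 2 * measure Q (E g)"
    if "g \<in> G" for g
  proof -
    have "ln M * measure (P g) (E g) \<le> K + ln (1 + (M - 1) * measure Q (E g))"
      using change_of_measure_bound[OF assms(2) L(1,2) P(1,2) KL(1) E, OF that that _ that that that that,
          of "ln M"] KL(2)[OF that] \<open>ln M > 0\<close> \<open>M > 0\<close>
      by simp
    also have "\<dots> \<le> K + ln 2 - 1/2 + (M - 1) / 2 * measure Q (E g)"
    proof -
      have "ln (1 + (M - 1) * measure Q (E g)) \<le> ln 2 + ((1 + (M - 1) * measure Q (E g)) - 2) / 2"
        using \<open>M > 1\<close> by (intro ln_le_ln2_plus add_pos_nonneg) auto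
      also have "\<dots> = ln 2 - 1/2 + (M - 1) / 2 * measure Q (E g)"
        by (simp add: field_simps)
      finally show ?thesis by linarith
    qed
    finally show ?thesis .
  qed
  have "ln M * (\<Sum>g\<in>G. measure (P g) (E g)) \<le> (\<Sum>g\<in>G. K + ln 2 - 1/2 + (M - 1) / 2 * measure Q (E g))"
    unfolding sum_distrib_left using single by (rule sum_mono)
  also have "\<dots> = M * (K + ln 2 - 1/2) + (M - 1) / 2 * (\<Sum>g\<in>G. measure Q (E g))"
    by (simp add: sum.distrib sum_distrib_left M_def)
  also have "\<dots> \<le> M * (K + ln 2 - 1/2) + (M - 1) / 2"
    using sum_Q \<open>M > 1\<close> by (simp add: mult_left_le)
  also have "\<dots> = M * (K + ln 2) - 1/2"
    by (simp add: field_simps)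
  also have "\<dots> \<le> ln M * (M / 2)"
  proof -
    have "M * (K + ln 2) \<le> M * (ln M / 2)"
      using mult_left_mono[OF assms(5)[folded M_def]] \<open>M > 0\<close> by simp
    then show ?thesis by (simp add: mult.commute)
  qed
  finally show ?thesis
    using \<open>ln M > 0\<close> by (simp add: M_def)
qed

section \<open>Size of the class and the lower bound\<close>

lemma finite_admissible: "finite {A. admissible p q k A}"
  by (rule finite_subset[of _ "Pow ({1..q} \<times> {1..p})"]) (auto simp: admissible_def)

text \<open>Choosing a support \<open>J\<close> of \<open>k + 1\<close> coordinates and a frequency for each of them gives
  distinct admissible sets, namely the graphs of the frequency maps.\<close>
lemma card_admissible_ge:
  assumes "k + 1 \<le> p"
  shows "q ^ (k + 1) * (p choose (k + 1)) \<le> card {A. admissible p q k A}"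
proof -
  define T where "T = (SIGMA J:{J. J \<subseteq> {1..p} \<and> card J = k + 1}. PiE J (\<lambda>_. {1..q}))"
  define graph where "graph = (\<lambda>(J, h::nat \<Rightarrow> nat). (\<lambda>j. (h j, j)) ` J)"
  have "card T = (\<Sum>J | J \<subseteq> {1..p} \<and> card J = k + 1. card (PiE J (\<lambda>_. {1..q})))"
    unfolding T_def
    by (intro card_SigmaI) (auto intro!: finite_PiE elim: finite_subset)
  also have "\<dots> = (\<Sum>J | J \<subseteq> {1..p} \<and> card J = k + 1. q ^ (k + 1))"
  proof (intro sum.cong refl)
    fix J assume "J \<in> {J. J \<subseteq> {1..p} \<and> card J = k + 1}"
    then have "finite J" "card J = k + 1"
      using finite_subset[of J "{1..p}"] by auto
    then show "card (PiE J (\<lambda>_. {1..q})) = q ^ (k + 1)"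
      by (simp add: card_PiE)
  qed
  also have "\<dots> = q ^ (k + 1) * (p choose (k + 1))"
    using n_subsets[of "{1..p}" "k + 1"] by simp
  finally have card_T: "card T = q ^ (k + 1) * (p choose (k + 1))" .
  have "inj_on graph T"
  proof (rule inj_onI, clarify)
    fix J h J' h' assume "(J, h) \<in> T" "(J', h') \<in> T" and eq: "graph (J, h) = graph (J', h')"
    then have h: "h \<in> PiE J (\<lambda>_. {1..q})" and h': "h' \<in> PiE J' (\<lambda>_. {1..q})"
      unfolding T_def by auto
    have "J = snd ` graph (J, h)" "J' = snd ` graph (J', h')"
      unfolding graph_def by (auto simp: image_image)
    then have "J = J'" using eq by simp
    moreover have "h j = h' j" if "j \<in> J" for j
      using eq that \<open>J = J'\<close> unfolding graph_def by auto
    ultimately show "J = J' \<and> h = h'"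
      using PiE_ext[OF h, of h'] h' by auto
  qed
  moreover have "graph ` T \<subseteq> {A. admissible p q k A}"
  proof clarify
    fix J h assume "(J, h) \<in> T"
    then have "J \<subseteq> {1..p}" "card J = k + 1" "h \<in> PiE J (\<lambda>_. {1..q})"
      unfolding T_def by auto
    moreover have "inj_on (\<lambda>j. (h j, j)) J"
      by (auto intro: inj_onI)
    ultimately show "admissible p q k (graph (J, h))"
      unfolding admissible_def graph_def by (auto simp: card_image intro: inj_onI)
  qed
  ultimately show ?thesis
    using card_inj_on_le[OF _ _ finite_admissible] card_T by metis
qed

lemma card_Gcls: "card (Gcls p q k) = card {A. admissible p q k A}"
proof -
  have "inj_on gA {A. admissible p q k A}"
  proof (rule inj_onI)
    fix A B assume "A \<in> {A. admissible p q k A}" "B \<in> {A. admissible p q k A}" "gA A = gA B"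
    then show "A = B"
      using gA_orthonormal[of A q p A] gA_orthonormal[of A q p B]
      by (auto simp: admissible_def split: if_splits)
  qed
  then show ?thesis
    unfolding Gcls_def by (rule card_image)
qed

lemma finite_Gcls: "finite (Gcls p q k)"
  unfolding Gcls_def using finite_admissible by simp

lemma Gcls_norm:
  assumes "g \<in> Gcls p q k"
  shows "(\<integral>x. (g x)\<^sup>2 \<partial>X_dist p) = 1"
  using Gcls_orthonormal[OF assms assms] by (simp add: power2_eq_square)

lemma sum_prob_estimator_correct_le:
  assumes "q > 0" "k + 1 \<le> p" "\<sigma> > 0"
    and ghat: "ghat \<in> measurable (sample_space n p) (count_space (Gcls p q k))"
    and n: "real n \<le> (ln (real q ^ (k + 1) * real (p choose (k + 1))) - 2 * ln 2) * \<sigma>\<^sup>2 / 2"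
  shows "(\<Sum>g\<in>Gcls p q k. measure (sample_dist n p \<sigma> g) (ghat -` {g} \<inter> space (sample_space n p)))
      \<le> card (Gcls p q k) / 2"
proof (rule fano_sum_le[where Q="sample_dist n p \<sigma> (\<lambda>_. 0)" and L="sample_lr \<sigma> n" and K="n / (2 * \<sigma>\<^sup>2)"])
  define M0 where "M0 = real q ^ (k + 1) * real (p choose (k + 1))"
  have "q ^ (k + 1) * (p choose (k + 1)) \<le> card (Gcls p q k)"
    using card_admissible_ge[OF assms(2), of q] by (simp add: card_Gcls)
  then have "M0 \<le> card (Gcls p q k)"
    unfolding M0_def by (metis of_nat_le_iff of_nat_mult of_nat_power)
  moreover have "0 < M0"
    using assms(1,2) by (simp add: M0_def)
  ultimately have "ln M0 \<le> ln (card (Gcls p q k))"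
    by simp
  moreover have "n / (2 * \<sigma>\<^sup>2) \<le> (ln M0 - 2 * ln 2) / 4"
    using n \<open>\<sigma> > 0\<close> unfolding M0_def by (simp add: field_simps)
  moreover have "2 * ln 2 \<le> ln M0"
  proof -
    have "0 \<le> (ln M0 - 2 * ln 2) * \<sigma>\<^sup>2"
      using n unfolding M0_def by linarith
    then show ?thesis
      using \<open>\<sigma> > 0\<close> by (simp add: zero_le_mult_iff)
  qed
  ultimately show "n / (2 * \<sigma>\<^sup>2) + ln 2 \<le> ln (card (Gcls p q k)) / 2"
    by argo
  show "0 \<le> n / (2 * \<sigma>\<^sup>2)" by simp
  show "finite (Gcls p q k)" by (rule finite_Gcls)
  show "prob_space (sample_dist n p \<sigma> (\<lambda>_. 0))"
    using prob_space_sample_dist[OF assms(3)] by simp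
  show "disjoint_family_on (\<lambda>g. ghat -` {g} \<inter> space (sample_space n p)) (Gcls p q k)"
    by (auto simp: disjoint_family_on_def)
  fix g assume g: "g \<in> Gcls p q k"
  show "ghat -` {g} \<inter> space (sample_space n p) \<in> sets (sample_dist n p \<sigma> (\<lambda>_. 0))"
    using measurable_sets[OF ghat, of "{g}"] g by (simp add: sets_sample_dist)
  show "sample_lr \<sigma> n g \<in> borel_measurable (sample_dist n p \<sigma> (\<lambda>_. 0))"
    using sample_lr_measurable[OF Gcls_measurable[OF g]] by (simp add: measurable_cong_sets[OF sets_sample_dist refl])
  show "sample_lr \<sigma> n g S > 0" for S
    by (rule sample_lr_pos)
  show "sample_dist n p \<sigma> g = density (sample_dist n p \<sigma> (\<lambda>_. 0)) (\<lambda>S. ennreal (sample_lr \<sigma> n g S))"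
    by (rule sample_dist_eq_density[OF assms(3) Gcls_measurable[OF g]])
  show "prob_space (sample_dist n p \<sigma> g)"
    by (rule prob_space_sample_dist[OF assms(3) Gcls_measurable[OF g]])
  note kl = kl_sample_lr[OF assms(3) Gcls_measurable[OF g] abs_Gcls_le[OF g]]
  show "integrable (sample_dist n p \<sigma> g) (\<lambda>S. ln (sample_lr \<sigma> n g S))"
    by (rule kl(1))
  show "(\<integral>S. ln (sample_lr \<sigma> n g S) \<partial>sample_dist n p \<sigma> g) \<le> n / (2 * \<sigma>\<^sup>2)"
    using kl(2) Gcls_norm[OF g] by simp
qed

lemma prob_excess_risk_ge_1:
  assumes "\<sigma> > 0" "g \<in> Gcls p q k"
    and ghat: "ghat \<in> measurable (sample_space n p) (count_space (Gcls p q k))"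
  shows "measure (sample_dist n p \<sigma> g)
      {S \<in> space (sample_dist n p \<sigma> g). risk (D_dist p \<sigma> g) (ghat S) - risk (D_dist p \<sigma> g) g \<ge> 1}
    = 1 - measure (sample_dist n p \<sigma> g) (ghat -` {g} \<inter> space (sample_space n p))"
proof -
  interpret prob_space "sample_dist n p \<sigma> g"
    by (rule prob_space_sample_dist[OF assms(1) Gcls_measurable[OF assms(2)]])
  have space: "space (sample_dist n p \<sigma> g) = space (sample_space n p)"
    by (rule sets_eq_imp_space_eq[OF sets_sample_dist])
  have "{S \<in> space (sample_dist n p \<sigma> g). risk (D_dist p \<sigma> g) (ghat S) - risk (D_dist p \<sigma> g) g \<ge> 1}
      = space (sample_dist n p \<sigma> g) - ghat -` {g} \<inter> space (sample_space n p)"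
    using risk_excess_Gcls[OF assms(1,2)] measurable_space[OF ghat] by (auto simp: space)
  moreover have "ghat -` {g} \<inter> space (sample_space n p) \<in> events"
    using measurable_sets[OF ghat, of "{g}"] assms(2) by (simp add: sets_sample_dist)
  ultimately show ?thesis
    by (simp add: prob_compl)
qed

theorem corollary2:
  fixes p q k n :: nat and \<sigma> :: real
    and ghat :: "(nat \<Rightarrow> (nat \<Rightarrow> real) \<times> real) \<Rightarrow> ((nat \<Rightarrow> real) \<Rightarrow> real)"
  assumes "p > 0" "q > 0" "k > 0" "k + 1 \<le> p"
    and "\<sigma> > 0"
    and "ghat \<in> measurable (sample_space n p) (count_space (Gcls p q k))"
    and "real n \<le> (ln (real q ^ (k + 1) * real (p choose (k + 1))) - 2 * ln 2) * \<sigma>\<^sup>2 / 2"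
  shows "(\<Sum>g\<in>Gcls p q k. measure (sample_dist n p \<sigma> g)
            {S \<in> space (sample_dist n p \<sigma> g).
               risk (D_dist p \<sigma> g) (ghat S) - risk (D_dist p \<sigma> g) g \<ge> 1})
          / real (card (Gcls p q k)) \<ge> 1 / 2"
proof -
  let ?G = "Gcls p q k"
  let ?correct = "\<lambda>g. measure (sample_dist n p \<sigma> g) (ghat -` {g} \<inter> space (sample_space n p))"
  have "0 < q ^ (k + 1) * (p choose (k + 1))"
    using assms(2,4) by simp
  then have "card ?G > 0"
    unfolding card_Gcls using card_admissible_ge[OF assms(4), of q] by linarith
  have "(\<Sum>g\<in>?G. measure (sample_dist n p \<sigma> g)
            {S \<in> space (sample_dist n p \<sigma> g). risk (D_dist p \<sigma> g) (ghat S) - risk (D_dist p \<sigma> g) g \<ge> 1})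
      = (\<Sum>g\<in>?G. 1 - ?correct g)"
    using prob_excess_risk_ge_1[OF assms(5) _ assms(6)] by simp
  also have "\<dots> = card ?G - (\<Sum>g\<in>?G. ?correct g)"
    by (simp add: sum_subtractf)
  also have "\<dots> \<ge> card ?G / 2"
    using sum_prob_estimator_correct_le[OF assms(2,4,5,6,7)] by simp
  finally show ?thesis
    using \<open>card ?G > 0\<close> by (simp add: field_simps)
qed

end
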